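(* Let $f:\mathbb{X}(N,k)\to\mathbb{R}$ be a monotone $k$-submodular function, let $\hat{\mathbf{x}}\in\mathcal{X}$, and let $\hat{\mathbf{S}}=(\hat S_1,\dots,\hat S_k)$ be an optimal solution of the defender's problem defining $\Phi_D(\hat{\mathbf{x}})$, so $\Phi_D(\hat{\mathbf{x}})=f(\hat{\mathbf{S}})$. For each $q$ fix an arbitrary ordering $\hat S_q=\{i_{q,1},\dots,i_{q,T_q}\}$ and for $1\le t\le T_q$ let $\hat{\mathbf{S}}_{q,(t)}=(\hat S_1,\dots,\hat S_{q-1},\{i_{q,1},\dots,i_{q,t-1}\},\emptyset,\dots,\emptyset)$ (the $q$-th component is empty when $t=1$). Then for every $\mathbf{x}\in\mathcal{X}$, $$\Phi_D(\mathbf{x})\;\ge\;\Phi_D(\hat{\mathbf{x}})-\sum_{q=1}^k\sum_{t=1}^{T_q}\rho_{q,i_{q,t}}(\hat{\mathbf{S}}_{q,(t)})\,x_{q,i_{q,t}},$$ and moreover the right-hand side of this inequality is at least $\Phi_D(\hat{\mathbf{x}})-\sum_{q=1}^k\sum_{i\in\hat S_q}\rho_{q,i}(\boldsymbol{\emptyset})\,x_{q,i}$ for every $\mathbf{x}\in\mathcal{X}$.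
   Context: Let $n,k$ be positive integers and $N=\{1,\dots,n\}$. $\mathbb{X}(N,k)$ denotes the set of $k$-tuples $\mathbf{S}=(S_1,\dots,S_k)$ of pairwise disjoint subsets of $N$; such a tuple is identified with $\mathbf{s}\in\{0,1\}^{kn}$ where $s_{q,i}=1$ iff $i\in S_q$. For $\mathbf{X},\mathbf{Y}\in\mathbb{X}(N,k)$ let $\mathbf{X}\sqcap\mathbf{Y}=(X_1\cap Y_1,\dots,X_k\cap Y_k)$ and $\mathbf{X}\sqcup\mathbf{Y}$ be the tuple whose $i$-th component is $(X_i\cup Y_i)\setminus\bigcup_{q\ne i}(X_q\cup Y_q)$. A function $f:\mathbb{X}(N,k)\to\mathbb{R}$ is $k$-submodular if $f(\mathbf{X})+f(\mathbf{Y})\ge f(\mathbf{X}\sqcap\mathbf{Y})+f(\mathbf{X}\sqcup\mathbf{Y})$ for all $\mathbf{X},\mathbf{Y}$, and monotone if $f(\mathbf{X})\le f(\mathbf{Y})$ whenever $X_q\subseteq Y_q$ for all $q$. $\boldsymbol{\emptyset}=(\emptyset,\dots,\emptyset)$. For $\mathbf{X}\in\mathbb{X}(N,k)$, $q\in\{1,\dots,k\}$ and $i\in N\setminus\bigcup_r X_r$, the marginal gain is $\rho_{q,i}(\mathbf{X})=f(X_1,\dots,X_{q-1},X_q\cup\{i\},X_{q+1},\dots,X_k)-f(\mathbf{X})$. Given nonnegative integer budgets $A_1,\dots,A_k$ and $D_1,\dots,D_k$, the attacker's feasible set is $\mathcal{X}=\{\mathbf{x}\in\{0,1\}^{kn}:\sum_{i=1}^n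 x_{q,i}\le A_q\ \forall q,\ \sum_{q=1}^k x_{q,i}\le 1\ \forall i\in N\}$, and $\Phi_D(\mathbf{x})=\max\{f(\mathbf{S}):\mathbf{S}\in\mathbb{X}(N,k),\ s_{q,i}\le 1-x_{q,i}\ \forall q,i,\ \sum_{i=1}^n s_{q,i}\le D_q\ \forall q\}$. *)

theory Defs
  imports Complex_Main
begin

text \<open>A k-tuple of pairwise disjoint subsets of N = {1..n} is represented as a function
  S :: nat \<Rightarrow> nat set, component q being S q for q \<in> {1..k}, and S q = {} for q outside {1..k}.\<close>

definition kdisj :: "nat \<Rightarrow> nat \<Rightarrow> (nat \<Rightarrow> nat set) \<Rightarrow> bool" where
  "kdisj n k S \<longleftrightarrow> (\<forall>q. q \<notin> {1..k} \<longrightarrow> S q = {}) \<and> (\<forall>q. S q \<subseteq> {1..n})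
     \<and> (\<forall>q\<in>{1..k}. \<forall>r\<in>{1..k}. q \<noteq> r \<longrightarrow> S q \<inter> S r = {})"

definition kmeet :: "(nat \<Rightarrow> nat set) \<Rightarrow> (nat \<Rightarrow> nat set) \<Rightarrow> (nat \<Rightarrow> nat set)" where
  "kmeet X Y = (\<lambda>q. X q \<inter> Y q)"

definition kjoin :: "nat \<Rightarrow> (nat \<Rightarrow> nat set) \<Rightarrow> (nat \<Rightarrow> nat set) \<Rightarrow> (nat \<Rightarrow> nat set)" where
  "kjoin k X Y = (\<lambda>q. if q \<in> {1..k}
       then (X q \<union> Y q) - (\<Union>r\<in>{1..k} - {q}. X r \<union> Y r) else {})"

definition k_submodular :: "nat \<Rightarrow> nat \<Rightarrow> ((nat \<Rightarrow> nat set) \<Rightarrow> real) \<Rightarrow> bool" where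
  "k_submodular n k f \<longleftrightarrow> (\<forall>X Y. kdisj n k X \<longrightarrow> kdisj n k Y \<longrightarrow>
      f X + f Y \<ge> f (kmeet X Y) + f (kjoin k X Y))"

definition k_monotone :: "nat \<Rightarrow> nat \<Rightarrow> ((nat \<Rightarrow> nat set) \<Rightarrow> real) \<Rightarrow> bool" where
  "k_monotone n k f \<longleftrightarrow> (\<forall>X Y. kdisj n k X \<longrightarrow> kdisj n k Y \<longrightarrow>
      (\<forall>q\<in>{1..k}. X q \<subseteq> Y q) \<longrightarrow> f X \<le> f Y)"

definition rho :: "((nat \<Rightarrow> nat set) \<Rightarrow> real) \<Rightarrow> nat \<Rightarrow> nat \<Rightarrow> (nat \<Rightarrow> nat set) \<Rightarrow> real" where
  "rho f q i X = f (X(q := insert i (X q))) - f X"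

definition attacker_feasible :: "nat \<Rightarrow> nat \<Rightarrow> (nat \<Rightarrow> nat) \<Rightarrow> (nat \<Rightarrow> nat \<Rightarrow> nat) \<Rightarrow> bool" where
  "attacker_feasible n k A x \<longleftrightarrow>
     (\<forall>q\<in>{1..k}. \<forall>i\<in>{1..n}. x q i \<in> {0, 1}) \<and>
     (\<forall>q\<in>{1..k}. (\<Sum>i=1..n. x q i) \<le> A q) \<and>
     (\<forall>i\<in>{1..n}. (\<Sum>q=1..k. x q i) \<le> 1)"

text \<open>Defender feasibility: s_{q,i} \<le> 1 - x_{q,i} and |S_q| \<le> D_q.\<close>
definition defender_feasible ::
  "nat \<Rightarrow> nat \<Rightarrow> (nat \<Rightarrow> nat) \<Rightarrow> (nat \<Rightarrow> nat \<Rightarrow> nat) \<Rightarrow> (nat \<Rightarrow> nat set) \<Rightarrow> bool" where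
  "defender_feasible n k D x S \<longleftrightarrow> kdisj n k S \<and>
     (\<forall>q\<in>{1..k}. \<forall>i\<in>S q. x q i = 0) \<and>
     (\<forall>q\<in>{1..k}. card (S q) \<le> D q)"

definition Phi_D ::
  "nat \<Rightarrow> nat \<Rightarrow> (nat \<Rightarrow> nat) \<Rightarrow> ((nat \<Rightarrow> nat set) \<Rightarrow> real) \<Rightarrow> (nat \<Rightarrow> nat \<Rightarrow> nat) \<Rightarrow> real" where
  "Phi_D n k D f x = Max (f ` {S. defender_feasible n k D x S})"

text \<open>The partial tuple S_{q,(t)} for the ordering L q of component q (0-based t here:
  prefix of the first t elements of L q).\<close>
definition partial_tuple :: "(nat \<Rightarrow> nat set) \<Rightarrow> (nat \<Rightarrow> nat list) \<Rightarrow> nat \<Rightarrow> nat \<Rightarrow> (nat \<Rightarrow> nat set)" where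
  "partial_tuple S L q t = (\<lambda>r. if r < q then S r else if r = q then set (take t (L q)) else {})"

end

theory Submission
  imports Defs
begin

text \<open>Let \<open>S'\<close> be the part of \<open>Shat\<close> that survives the attack \<open>x\<close>; it is feasible for the
  defender against \<open>x\<close>, so \<open>\<Phi>\<^sub>D(x) \<ge> f(S')\<close>. Build \<open>Shat\<close> element by element in the given
  order, and simultaneously its surviving part. An element that survives is added to both
  chains, and by diminishing returns (a consequence of k-submodularity) it increases the
  smaller chain at least as much as the larger one; an attacked element is added only to the
  larger chain and increases it by its marginal gain \<open>\<rho>\<close>. Summing, \<open>f(Shat) - f(S')\<close> is at
  most the sum of the marginal gains of the attacked elements. Diminishing returns once more
  bounds each of these gains by the gain at the empty tuple.\<close>

definition surviving :: "(nat \<Rightarrow> nat \<Rightarrow> nat) \<Rightarrow> (nat \<Rightarrow> nat set) \<Rightarrow> (nat \<Rightarrow> nat set)" where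
  "surviving x S = (\<lambda>r. {i \<in> S r. x r i = 0})"

definition kprefix :: "(nat \<Rightarrow> nat set) \<Rightarrow> nat \<Rightarrow> (nat \<Rightarrow> nat set)" where
  "kprefix S q = (\<lambda>r. if r \<le> q then S r else {})"

lemma kdisj_mono:
  assumes "kdisj n k S" "\<And>r. T r \<subseteq> S r"
  shows "kdisj n k T"
  using assms unfolding kdisj_def by blast

lemma finite_kdisj: "finite {S. kdisj n k S}"
proof (rule finite_subset)
  show "{S. kdisj n k S} \<subseteq>
      {S. \<forall>q. (q \<in> {1..k} \<longrightarrow> S q \<in> Pow {1..n}) \<and> (q \<notin> {1..k} \<longrightarrow> S q = {})}"
    unfolding kdisj_def by auto
  show "finite {S. \<forall>q. (q \<in> {1..k} \<longrightarrow> S q \<in> Pow {1..n}) \<and> (q \<notin> {1..k} \<longrightarrow> S q = {})}"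
    by (rule finite_set_of_finite_funs) auto
qed

lemma kdisj_insert:
  assumes "kdisj n k A" "q \<in> {1..k}" "i \<in> {1..n}" "\<And>r. i \<notin> A r"
  shows "kdisj n k (A(q := insert i (A q)))"
  using assms unfolding kdisj_def by auto

lemma kmeet_insert_eq:
  assumes "\<And>r. A r \<subseteq> B r" "\<And>r. i \<notin> B r"
  shows "kmeet B (A(q := insert i (A q))) = A"
  using assms by (auto simp: kmeet_def fun_eq_iff)

lemma kjoin_eq_of_union:
  assumes X: "kdisj n k X" and YZ: "\<And>r. Y r \<union> Z r = X r"
  shows "kjoin k Y Z = X"
proof
  fix q
  have X0: "X q = {}" if "q \<notin> {1..k}" using X that unfolding kdisj_def by blast
  have "X q \<inter> (\<Union>r\<in>{1..k} - {q}. X r) = {}" if "q \<in> {1..k}"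
    using X that unfolding kdisj_def by blast
  then show "kjoin k Y Z q = X q"
    using X0 unfolding kjoin_def YZ by auto
qed

lemma nth_notin_set_take:
  assumes "distinct l" "t < length l"
  shows "l ! t \<notin> set (take t l)"
  using assms by (auto simp: in_set_conv_nth nth_eq_iff_index_eq)

lemma rho_antimono:
  assumes sub: "k_submodular n k f"
    and A: "kdisj n k A" and B: "kdisj n k B" and AB: "\<And>r. A r \<subseteq> B r"
    and q: "q \<in> {1..k}" and i: "i \<in> {1..n}" and iB: "\<And>r. i \<notin> B r"
  shows "rho f q i B \<le> rho f q i A"
proof -
  \<comment> \<open>k-submodularity for \<open>B\<close> and \<open>A + i\<close>: their meet is \<open>A\<close> and their join is \<open>B + i\<close>.\<close>
  have iA: "i \<notin> A r" for r using AB iB by blast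
  have "kjoin k B (A(q := insert i (A q))) = B(q := insert i (B q))"
    using AB by (intro kjoin_eq_of_union[OF kdisj_insert[OF B q i iB]]) auto
  moreover have "f B + f (A(q := insert i (A q)))
      \<ge> f (kmeet B (A(q := insert i (A q)))) + f (kjoin k B (A(q := insert i (A q))))"
    using sub B kdisj_insert[OF A q i iA] unfolding k_submodular_def by blast
  moreover have "kmeet B (A(q := insert i (A q))) = A"
    using AB iB by (rule kmeet_insert_eq)
  ultimately show ?thesis by (simp add: rho_def)
qed

lemma defender_feasible_surviving:
  assumes "defender_feasible n k D y S"
  shows "defender_feasible n k D x (surviving x S)"
  unfolding defender_feasible_def
proof (intro conjI ballI)
  have S: "kdisj n k S" using assms unfolding defender_feasible_def by simp
  then show "kdisj n k (surviving x S)" by (rule kdisj_mono) (auto simp: surviving_def)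
  fix q assume q: "q \<in> {1..k}"
  have "finite (S q)" using S finite_subset unfolding kdisj_def by blast
  then have "card (surviving x S q) \<le> card (S q)"
    by (rule card_mono) (auto simp: surviving_def)
  also have "\<dots> \<le> D q" using assms q unfolding defender_feasible_def by blast
  finally show "card (surviving x S q) \<le> D q" .
qed (auto simp: surviving_def)

lemma surviving_gap_insert:
  assumes sub: "k_submodular n k f" and P: "kdisj n k P"
    and q: "q \<in> {1..k}" and i: "i \<in> {1..n}" and iP: "\<And>r. i \<notin> P r" and x: "x q i \<le> 1"
  shows "f (P(q := insert i (P q))) - f (surviving x (P(q := insert i (P q))))
      \<le> f P - f (surviving x P) + rho f q i P * real (x q i)"
proof (cases "x q i = 0")
  case True
  then have "surviving x (P(q := insert i (P q)))
      = (surviving x P)(q := insert i (surviving x P q))"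
    by (auto simp: surviving_def fun_eq_iff)
  moreover have "rho f q i P \<le> rho f q i (surviving x P)"
    by (rule rho_antimono[OF sub kdisj_mono[OF P] P _ q i iP]) (auto simp: surviving_def)
  ultimately show ?thesis using True by (simp add: rho_def)
next
  case False
  then have "surviving x (P(q := insert i (P q))) = surviving x P"
    by (auto simp: surviving_def fun_eq_iff)
  moreover have "x q i = 1" using False x by simp
  ultimately show ?thesis by (simp add: rho_def)
qed

lemma surviving_gap_fill_component:
  assumes sub: "k_submodular n k f" and q: "q \<in> {1..k}" and Pq: "P q = {}"
    and "kdisj n k (P(q := set l))" and "distinct l" and "\<And>r. set l \<inter> P r = {}"
    and "\<forall>i\<in>set l. x q i \<le> 1"
  shows "f (P(q := set l)) - f (surviving x (P(q := set l)))
      \<le> f P - f (surviving x P)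
        + (\<Sum>t<length l. rho f q (l ! t) (P(q := set (take t l))) * real (x q (l ! t)))"
  using assms(4-)
proof (induction l rule: rev_induct)
  case Nil
  then show ?case using Pq by (simp add: fun_upd_idem)
next
  case (snoc i l)
  let ?P = "P(q := set l)"
  have kP: "kdisj n k ?P" by (rule kdisj_mono[OF snoc.prems(1)]) auto
  have "set (l @ [i]) \<subseteq> {1..n}" using snoc.prems(1) unfolding kdisj_def by (metis fun_upd_same)
  then have iN: "i \<in> {1..n}" by simp
  have iP: "i \<notin> ?P r" for r using snoc.prems(2,3) by auto
  have xi: "x q i \<le> 1" using snoc.prems(4) by simp
  have snoc_upd: "?P(q := insert i (?P q)) = P(q := set (l @ [i]))" by simp
  have "f (P(q := set (l @ [i]))) - f (surviving x (P(q := set (l @ [i]))))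
      \<le> f ?P - f (surviving x ?P) + rho f q i ?P * real (x q i)"
    using surviving_gap_insert[where x = x, OF sub kP q iN iP xi] unfolding snoc_upd .
  moreover have "f ?P - f (surviving x ?P)
      \<le> f P - f (surviving x P)
        + (\<Sum>t<length l. rho f q (l ! t) (P(q := set (take t l))) * real (x q (l ! t)))"
    using snoc.prems by (intro snoc.IH[OF kP]) auto
  moreover have "(\<Sum>t<length (l @ [i]).
        rho f q ((l @ [i]) ! t) (P(q := set (take t (l @ [i])))) * real (x q ((l @ [i]) ! t)))
      = (\<Sum>t<length l. rho f q (l ! t) (P(q := set (take t l))) * real (x q (l ! t)))
        + rho f q i ?P * real (x q i)"
    by (simp add: nth_append cong: sum.cong_simp)
  ultimately show ?case by linarith
qed

lemma surviving_gap_kprefix: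
  assumes sub: "k_submodular n k f" and S: "kdisj n k S"
    and L: "\<forall>q\<in>{1..k}. distinct (L q) \<and> set (L q) = S q"
    and x: "\<forall>q\<in>{1..k}. \<forall>i\<in>{1..n}. x q i \<le> 1"
    and "q \<le> k"
  shows "f (kprefix S q) - f (surviving x (kprefix S q))
      \<le> (\<Sum>r=1..q. \<Sum>t<length (L r).
            rho f r (L r ! t) (partial_tuple S L r t) * real (x r (L r ! t)))"
  using \<open>q \<le> k\<close>
proof (induction q)
  case 0
  have "S 0 = {}" using S unfolding kdisj_def by simp
  then have "kprefix S 0 = surviving x (kprefix S 0)"
    by (auto simp: kprefix_def surviving_def fun_eq_iff)
  then show ?case by simp
next
  case (Suc q)
  let ?P = "kprefix S q"
  have q: "Suc q \<in> {1..k}" using Suc.prems by simp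
  have Sdisj: "S r \<inter> S (Suc q) = {}" if "r \<le> q" for r
  proof (cases "r = 0")
    case True
    then show ?thesis using S unfolding kdisj_def by simp
  next
    case False
    then show ?thesis using S q that unfolding kdisj_def by simp
  qed
  have prefix_Suc: "kprefix S (Suc q) = ?P(Suc q := set (L (Suc q)))"
    using L q by (auto simp: kprefix_def fun_eq_iff)
  have partial: "partial_tuple S L (Suc q) t = ?P(Suc q := set (take t (L (Suc q))))" for t
    by (auto simp: kprefix_def partial_tuple_def fun_eq_iff)
  have "f (kprefix S (Suc q)) - f (surviving x (kprefix S (Suc q)))
      \<le> f ?P - f (surviving x ?P)
        + (\<Sum>t<length (L (Suc q)). rho f (Suc q) (L (Suc q) ! t) (partial_tuple S L (Suc q) t)
            * real (x (Suc q) (L (Suc q) ! t)))"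
    unfolding prefix_Suc partial
  proof (rule surviving_gap_fill_component[OF sub q])
    show "kdisj n k (?P(Suc q := set (L (Suc q))))"
      using kdisj_mono[OF S, of "kprefix S (Suc q)"] prefix_Suc
      by (simp add: kprefix_def)
    show "\<forall>i\<in>set (L (Suc q)). x (Suc q) i \<le> 1"
      using L x q S unfolding kdisj_def by blast
  qed (use L q Sdisj in \<open>auto simp: kprefix_def\<close>)
  then show ?case using Suc by simp
qed

lemma finite_defender_feasible: "finite {S. defender_feasible n k D x S}"
  by (rule finite_subset[OF _ finite_kdisj]) (auto simp: defender_feasible_def)

lemma Phi_D_ge:
  assumes "defender_feasible n k D x S"
  shows "f S \<le> Phi_D n k D f x"
  unfolding Phi_D_def using finite_defender_feasible assms by (intro Max_ge) auto

lemma Phi_D_eq_optimal: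
  assumes "defender_feasible n k D x S" and "\<forall>T. defender_feasible n k D x T \<longrightarrow> f T \<le> f S"
  shows "Phi_D n k D f x = f S"
  unfolding Phi_D_def using finite_defender_feasible assms by (intro Max_eqI) auto

lemma sum_nth_distinct:
  assumes "distinct l"
  shows "(\<Sum>t<length l. g (l ! t)) = sum g (set l)"
  using sum_list_distinct_conv_sum_set[OF assms, of g] sum_list_sum_nth[of "map g l"]
  by (simp add: atLeast0LessThan)

lemma sum_partial_gains_le:
  assumes sub: "k_submodular n k f" and S: "kdisj n k S"
    and q: "q \<in> {1..k}" and Lq: "distinct (L q)" "set (L q) = S q"
  shows "(\<Sum>t<length (L q). rho f q (L q ! t) (partial_tuple S L q t) * real (x q (L q ! t)))
      \<le> (\<Sum>i\<in>S q. rho f q i (\<lambda>_. {}) * real (x q i))"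
proof -
  have "rho f q (L q ! t) (partial_tuple S L q t) \<le> rho f q (L q ! t) (\<lambda>_. {})"
    if t: "t < length (L q)" for t
  proof (rule rho_antimono[OF sub _ kdisj_mono[OF S]])
    have "S r \<inter> S q = {}" if "r < q" for r
      using S q that unfolding kdisj_def by (cases "r = 0") auto
    then show "L q ! t \<notin> partial_tuple S L q t r" for r
      using Lq(2) nth_mem[OF t] nth_notin_set_take[OF Lq(1) t]
      by (auto simp: partial_tuple_def)
    show "L q ! t \<in> {1..n}" using S Lq(2) nth_mem[OF t] unfolding kdisj_def by blast
    show "partial_tuple S L q t r \<subseteq> S r" for r
      using Lq(2) by (auto simp: partial_tuple_def dest: in_set_takeD)
  qed (use q in \<open>auto simp: kdisj_def\<close>)
  then have "(\<Sum>t<length (L q). rho f q (L q ! t) (partial_tuple S L q t) * real (x q (L q ! t)))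
      \<le> (\<Sum>t<length (L q). rho f q (L q ! t) (\<lambda>_. {}) * real (x q (L q ! t)))"
    by (intro sum_mono mult_right_mono) auto
  also have "\<dots> = (\<Sum>i\<in>S q. rho f q i (\<lambda>_. {}) * real (x q i))"
    using sum_nth_distinct[OF Lq(1)] Lq(2) by simp
  finally show ?thesis .
qed

theorem theorem2:
  fixes n k :: nat and f :: "(nat \<Rightarrow> nat set) \<Rightarrow> real"
    and A D :: "nat \<Rightarrow> nat" and xhat :: "nat \<Rightarrow> nat \<Rightarrow> nat"
    and Shat :: "nat \<Rightarrow> nat set" and L :: "nat \<Rightarrow> nat list"
  assumes "0 < n" and "0 < k"
    and "k_submodular n k f" and "k_monotone n k f"
    and "attacker_feasible n k A xhat"
    and "defender_feasible n k D xhat Shat"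
    and "\<forall>S. defender_feasible n k D xhat S \<longrightarrow> f S \<le> f Shat"
    and "\<forall>q\<in>{1..k}. distinct (L q) \<and> set (L q) = Shat q"
  shows "\<forall>x. attacker_feasible n k A x \<longrightarrow>
      Phi_D n k D f x \<ge> Phi_D n k D f xhat -
        (\<Sum>q=1..k. \<Sum>t<length (L q).
           rho f q (L q ! t) (partial_tuple Shat L q t) * real (x q (L q ! t)))
    \<and> Phi_D n k D f xhat -
        (\<Sum>q=1..k. \<Sum>t<length (L q).
           rho f q (L q ! t) (partial_tuple Shat L q t) * real (x q (L q ! t)))
      \<ge> Phi_D n k D f xhat - (\<Sum>q=1..k. \<Sum>i\<in>Shat q. rho f q i (\<lambda>_. {}) * real (x q i))"
proof (intro allI impI conjI)
  fix x assume "attacker_feasible n k A x"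
  then have x: "\<forall>q\<in>{1..k}. \<forall>i\<in>{1..n}. x q i \<le> 1"
    unfolding attacker_feasible_def by fastforce
  have S: "kdisj n k Shat" using assms(6) unfolding defender_feasible_def by simp
  have "kprefix Shat k = Shat"
    using S unfolding kdisj_def kprefix_def by (auto simp: fun_eq_iff)
  then have "f Shat - f (surviving x Shat)
      \<le> (\<Sum>q=1..k. \<Sum>t<length (L q).
            rho f q (L q ! t) (partial_tuple Shat L q t) * real (x q (L q ! t)))"
    using surviving_gap_kprefix[OF assms(3) S assms(8) x, of k] by simp
  moreover have "f (surviving x Shat) \<le> Phi_D n k D f x"
    by (rule Phi_D_ge[OF defender_feasible_surviving[OF assms(6)]])
  ultimately show "Phi_D n k D f x \<ge> Phi_D n k D f xhat -
        (\<Sum>q=1..k. \<Sum>t<length (L q).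
           rho f q (L q ! t) (partial_tuple Shat L q t) * real (x q (L q ! t)))"
    using Phi_D_eq_optimal[OF assms(6,7)] by simp
  show "Phi_D n k D f xhat -
        (\<Sum>q=1..k. \<Sum>t<length (L q).
           rho f q (L q ! t) (partial_tuple Shat L q t) * real (x q (L q ! t)))
      \<ge> Phi_D n k D f xhat - (\<Sum>q=1..k. \<Sum>i\<in>Shat q. rho f q i (\<lambda>_. {}) * real (x q i))"
    using assms(8) by (intro diff_left_mono sum_mono sum_partial_gains_le[OF assms(3) S]) auto
qed

end
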